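(* Let $N=\{1,\dots,n\}$ and let $F:2^N\to\mathbb{R}$ be quasi-submodular. Let $Q_1=\{i\in N: F(i\mid\emptyset)<0\}$ and $S_1=\{i\in N: F(i\mid N-i)\le 0\}$. Then every global minimizer of $F$ lies in $[Q_1,S_1]$, i.e., for every $X_*\in\arg\min_{X\subseteq N}F(X)$, $Q_1\subseteq X_*\subseteq S_1$.
   Context: For $A\subseteq N$ and $i\in N$, write $A+i=A\cup\{i\}$, $A-i=A\setminus\{i\}$, and $F(i\mid A)=F(A+i)-F(A)$. $F$ is quasi-submodular if for all $X,Y\subseteq N$ both hold: $F(X\cap Y)\ge F(X)\Rightarrow F(Y)\ge F(X\cup Y)$, and $F(X\cap Y)>F(X)\Rightarrow F(Y)>F(X\cup Y)$. $[A,B]=\{U: A\subseteq U\subseteq B\}$. *)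

theory Defs
  imports Main "HOL.Real"
begin

definition marg :: "('a set \<Rightarrow> real) \<Rightarrow> 'a \<Rightarrow> 'a set \<Rightarrow> real" where
  "marg F i A = F (insert i A) - F A"

definition quasi_submodular :: "'a set \<Rightarrow> ('a set \<Rightarrow> real) \<Rightarrow> bool" where
  "quasi_submodular N F \<longleftrightarrow>
     (\<forall>X Y. X \<subseteq> N \<longrightarrow> Y \<subseteq> N \<longrightarrow>
        (F (X \<inter> Y) \<ge> F X \<longrightarrow> F Y \<ge> F (X \<union> Y)) \<and>
        (F (X \<inter> Y) > F X \<longrightarrow> F Y > F (X \<union> Y)))"

end

theory Submission
  imports Defs
begin

text \<open>Both inclusions come from a single application of quasi-submodularity against the
minimizer \<open>X\<^sub>*\<close>. If \<open>F {i} < F {}\<close> and \<open>i \<notin> X\<^sub>*\<close>, take \<open>X = {i}\<close>, \<open>Y = X\<^sub>*\<close>: the strict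
implication gives \<open>F (X\<^sub>* + i) < F X\<^sub>*\<close>. If \<open>i \<in> X\<^sub>*\<close>, take \<open>X = X\<^sub>*\<close>, \<open>Y = N - i\<close>: minimality
gives \<open>F (X\<^sub>* - i) \<ge> F X\<^sub>*\<close>, so the weak implication gives \<open>F (N - i) \<ge> F N\<close>.\<close>

lemma quasi_submodularD_le:
  assumes "quasi_submodular N F" "X \<subseteq> N" "Y \<subseteq> N" "F (X \<inter> Y) \<ge> F X"
  shows "F Y \<ge> F (X \<union> Y)"
  using assms unfolding quasi_submodular_def by blast

lemma quasi_submodularD_less:
  assumes "quasi_submodular N F" "X \<subseteq> N" "Y \<subseteq> N" "F (X \<inter> Y) > F X"
  shows "F Y > F (X \<union> Y)"
  using assms unfolding quasi_submodular_def by blast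

lemma minimizer_contains_neg_singleton:
  assumes qs: "quasi_submodular N F" and Xs: "Xs \<subseteq> N"
    and min: "\<And>X. X \<subseteq> N \<Longrightarrow> F Xs \<le> F X"
    and i: "i \<in> N" and neg: "marg F i {} < 0"
  shows "i \<in> Xs"
proof (rule ccontr)
  assume "i \<notin> Xs"
  then have "{i} \<inter> Xs = {}" and "{i} \<union> Xs = insert i Xs" by auto
  moreover have "F ({i} \<inter> Xs) > F {i}" using neg \<open>{i} \<inter> Xs = {}\<close> by (simp add: marg_def)
  ultimately have "F Xs > F (insert i Xs)"
    using quasi_submodularD_less[OF qs _ Xs, of "{i}"] i by simp
  moreover have "F Xs \<le> F (insert i Xs)" using min i Xs by simp
  ultimately show False by simp
qed

lemma minimizer_element_nonpos_last_marg:
  assumes qs: "quasi_submodular N F" and Xs: "Xs \<subseteq> N"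
    and min: "\<And>X. X \<subseteq> N \<Longrightarrow> F Xs \<le> F X"
    and i: "i \<in> Xs"
  shows "marg F i (N - {i}) \<le> 0"
proof -
  have "F (Xs \<inter> (N - {i})) \<ge> F Xs" using min Xs by blast
  then have "F (N - {i}) \<ge> F (Xs \<union> (N - {i}))"
    using quasi_submodularD_le[OF qs Xs] by blast
  moreover have "Xs \<union> (N - {i}) = N" and "insert i (N - {i}) = N" using i Xs by auto
  ultimately show ?thesis by (simp add: marg_def)
qed

theorem lemma2:
  fixes n :: nat and F :: "nat set \<Rightarrow> real" and Xs :: "nat set"
  defines "N \<equiv> {1..n}"
  defines "Q1 \<equiv> {i \<in> N. marg F i {} < 0}"
  defines "S1 \<equiv> {i \<in> N. marg F i (N - {i}) \<le> 0}"
  assumes qs: "quasi_submodular N F"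
    and Xs_sub: "Xs \<subseteq> N"
    and Xs_min: "\<forall>X. X \<subseteq> N \<longrightarrow> F Xs \<le> F X"
  shows "Q1 \<subseteq> Xs \<and> Xs \<subseteq> S1"
proof
  show "Q1 \<subseteq> Xs"
    using minimizer_contains_neg_singleton[OF qs Xs_sub] Xs_min unfolding Q1_def by blast
  show "Xs \<subseteq> S1"
    using minimizer_element_nonpos_last_marg[OF qs Xs_sub] Xs_min Xs_sub unfolding S1_def by blast
qed

end
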